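(* Let $(\Omega,\mathcal F,\mathbb P)$ carry a one-dimensional L\'evy process $\{X_t\}_{t\ge0}$ with augmented filtration $\{\mathcal F_t\}$, admitting exponential moments $\mathbb E[\mathrm e^{\alpha X_t}]=\mathrm e^{t\psi(\alpha)}<\infty$ for all $\alpha$ in a connected real interval $A\ni 0$. Let $\{r_t\}$ (short rate) be adapted, let $\{\lambda_t\}$ (risk aversion) be positive and adapted, and for each $T$ let $\{\Omega_{tT}\}_{0\le t\le T}$ (bond volatility) be positive and adapted, with $\{-\lambda_t\}$, $\{\Omega_{tT}\}$ and $\{\Omega_{tT}-\lambda_t\}$ admissible, and with $\Omega_{tT}\to0$ as $t\to T$. Suppose the pricing kernel is $$\pi_t=\exp\Big(-\int_0^t r_s\,\mathrm ds-\int_0^t\lambda_s\,\mathrm dX_s-\int_0^t\psi(-\lambda_s)\,\mathrm ds\Big),$$ and the discount bond prices are $$P_{tT}=P_{0T}\exp\Big(\int_0^t r_s\,\mathrm ds+\int_0^t R(\lambda_s,\Omega_{sT})\,\mathrm ds+\int_0^t\Omega_{sT}\,\mathrm dX_s-\int_0^t\psi(\Omega_{sT})\,\mathrm ds\Big),$$ where $R(\lambda,\sigma)=\psi(\sigma)+\psi(-\lambda)-\psi(\sigma-\lambda)$, and that the maturity condition $\lim_{t\to T}P_{tT}=1$ holds for all $T$ (so that, writing $B_t=\exp(\int_0^t r_s\,\mathrm ds)$, the formula for $P_{tT}$ with $T=t$ equals $1$). Then the pricing kernel can be expressed as $$\pi_t=P_{0t}\exp\Big(\int_0^t(\Omega_{st}-\lambda_s)\,\mathrm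 dX_s-\int_0^t\psi(\Omega_{st}-\lambda_s)\,\mathrm ds\Big).$$
   Context: A predictable process $\{\alpha_t\}$ is called admissible if $\alpha_t\in A$ for all $t\ge0$ and the local martingale $\exp\big(\int_0^t\alpha_s\,\mathrm dX_s-\int_0^t\psi(\alpha_s)\,\mathrm ds\big)$ is a true martingale. $\{P_{0t}\}_{t\ge0}$ is the given initial term structure of discount bond prices. *)

theory Defs
  imports "HOL-Probability.Probability"
begin

definition real_filtration :: "'a measure \<Rightarrow> (real \<Rightarrow> 'a measure) \<Rightarrow> bool" where
  "real_filtration M F \<longleftrightarrow>
     (\<forall>t\<ge>0. sigma_finite_subalgebra M (F t)) \<and>
     (\<forall>s t. 0 \<le> s \<longrightarrow> s \<le> t \<longrightarrow> sets (F s) \<subseteq> sets (F t))"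

definition adapted :: "(real \<Rightarrow> 'a measure) \<Rightarrow> (real \<Rightarrow> 'a \<Rightarrow> real) \<Rightarrow> bool" where
  "adapted F Y \<longleftrightarrow> (\<forall>t\<ge>0. Y t \<in> borel_measurable (F t))"

definition levy_process :: "'a measure \<Rightarrow> (real \<Rightarrow> 'a measure) \<Rightarrow> (real \<Rightarrow> 'a \<Rightarrow> real) \<Rightarrow> bool" where
  "levy_process M F X \<longleftrightarrow>
     prob_space M \<and> real_filtration M F \<and> adapted F X \<and>
     (\<forall>\<omega>\<in>space M. X 0 \<omega> = 0) \<and>
     (\<forall>\<omega>\<in>space M. \<forall>t\<ge>0. ((\<lambda>s. X s \<omega>) \<longlongrightarrow> X t \<omega>) (at_right t)
                            \<and> (t > 0 \<longrightarrow> (\<exists>l. ((\<lambda>s. X s \<omega>) \<longlongrightarrow> l) (at_left t)))) \<and>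
     (\<forall>s t. 0 \<le> s \<longrightarrow> s \<le> t \<longrightarrow>
        distr M borel (\<lambda>\<omega>. X t \<omega> - X s \<omega>) = distr M borel (X (t - s)) \<and>
        (\<forall>B\<in>sets (F s). \<forall>C\<in>sets borel.
           measure M (B \<inter> ((\<lambda>\<omega>. X t \<omega> - X s \<omega>) -` C \<inter> space M))
           = measure M B * measure M ((\<lambda>\<omega>. X t \<omega> - X s \<omega>) -` C \<inter> space M)))"

definition levy_exponent :: "'a measure \<Rightarrow> (real \<Rightarrow> 'a \<Rightarrow> real) \<Rightarrow> real set \<Rightarrow> (real \<Rightarrow> real) \<Rightarrow> bool" where
  "levy_exponent M X A \<psi> \<longleftrightarrow>
     (\<forall>\<alpha>\<in>A. \<forall>t\<ge>0. integrable M (\<lambda>\<omega>. exp (\<alpha> * X t \<omega>)) \<and>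
        (\<integral>\<omega>. exp (\<alpha> * X t \<omega>) \<partial>M) = exp (t * \<psi> \<alpha>))"

text \<open>Abstract stochastic integral: SI f t \<omega> stands for the integral of f over [0,t] against dX.\<close>
definition linear_stoch_integral :: "((real \<Rightarrow> 'a \<Rightarrow> real) \<Rightarrow> real \<Rightarrow> 'a \<Rightarrow> real) \<Rightarrow> bool" where
  "linear_stoch_integral SI \<longleftrightarrow>
     (\<forall>f g a b t \<omega>. SI (\<lambda>s w. a * f s w + b * g s w) t \<omega> = a * SI f t \<omega> + b * SI g t \<omega>)"

definition admissible ::
  "'a measure \<Rightarrow> (real \<Rightarrow> 'a measure) \<Rightarrow> ((real \<Rightarrow> 'a \<Rightarrow> real) \<Rightarrow> real \<Rightarrow> 'a \<Rightarrow> real)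
    \<Rightarrow> real set \<Rightarrow> (real \<Rightarrow> real) \<Rightarrow> (real \<Rightarrow> 'a \<Rightarrow> real) \<Rightarrow> bool" where
  "admissible M F SI A \<psi> \<alpha> \<longleftrightarrow>
     (\<forall>t\<ge>0. \<forall>\<omega>\<in>space M. \<alpha> t \<omega> \<in> A) \<and> adapted F \<alpha> \<and>
     (let E = (\<lambda>t \<omega>. exp (SI \<alpha> t \<omega> - (LBINT s:{0..t}. \<psi> (\<alpha> s \<omega>)))) in
        adapted F E \<and> (\<forall>t\<ge>0. integrable M (E t)) \<and>
        (\<forall>s t. 0 \<le> s \<longrightarrow> s \<le> t \<longrightarrow> (AE \<omega> in M. real_cond_exp M (F s) (E t) \<omega> = E s \<omega>)))"

definition R_fun :: "(real \<Rightarrow> real) \<Rightarrow> real \<Rightarrow> real \<Rightarrow> real" where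
  "R_fun \<psi> l \<sigma> = \<psi> \<sigma> + \<psi> (- l) - \<psi> (\<sigma> - l)"

end

theory Submission
  imports Defs
begin

text \<open>At maturity the bond formula reads 1 = P_{0t} exp(\<dots>), which expresses P_{0t}
  through the integrals of r, \<psi>(\<Omega>), \<psi>(-\<lambda>) and \<psi>(\<Omega>-\<lambda>). Substituting into the
  claimed formula, the r- and \<psi>(\<Omega>)-terms cancel because
  R(\<lambda>,\<Omega>) = \<psi>(\<Omega>) + \<psi>(-\<lambda>) - \<psi>(\<Omega>-\<lambda>), and linearity of the stochastic
  integral splits \<integral>(\<Omega>-\<lambda>) dX into \<integral>\<Omega> dX - \<integral>\<lambda> dX; what remains is the kernel.\<close>

lemma stoch_integral_diff:
  assumes "linear_stoch_integral SI"
  shows "SI (\<lambda>s w. f s w - g s w) t \<omega> = SI f t \<omega> - SI g t \<omega>"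
  using assms[unfolded linear_stoch_integral_def, rule_format, of 1 f "-1" g t \<omega>] by simp

lemma set_integral_R_fun:
  fixes \<psi> :: "real \<Rightarrow> real"
  assumes "set_integrable lborel S (\<lambda>s. \<psi> (\<sigma> s))"
    and "set_integrable lborel S (\<lambda>s. \<psi> (- l s))"
    and "set_integrable lborel S (\<lambda>s. \<psi> (\<sigma> s - l s))"
  shows "(LBINT s:S. R_fun \<psi> (l s) (\<sigma> s))
           = (LBINT s:S. \<psi> (\<sigma> s)) + (LBINT s:S. \<psi> (- l s)) - (LBINT s:S. \<psi> (\<sigma> s - l s))"
  using assms unfolding R_fun_def by (simp add: set_integral_diff set_integral_add)

lemma eq_exp_minus_if_mult_exp_eq_1:
  fixes c x :: real
  assumes "c * exp x = 1"
  shows "c = exp (- x)"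
  using assms by (simp add: exp_minus field_simps)

theorem proposition1:
  fixes M :: "'a measure" and F :: "real \<Rightarrow> 'a measure"
    and X :: "real \<Rightarrow> 'a \<Rightarrow> real" and A :: "real set" and \<psi> :: "real \<Rightarrow> real"
    and SI :: "(real \<Rightarrow> 'a \<Rightarrow> real) \<Rightarrow> real \<Rightarrow> 'a \<Rightarrow> real"
    and r lam :: "real \<Rightarrow> 'a \<Rightarrow> real"
    and \<Omega> :: "real \<Rightarrow> real \<Rightarrow> 'a \<Rightarrow> real"   (* \<Omega> t T \<omega> = Omega_{tT}(\<omega>) *)
    and P0 :: "real \<Rightarrow> real"                (* initial term structure P_{0T} *)
    and P :: "real \<Rightarrow> real \<Rightarrow> 'a \<Rightarrow> real"   (* P t T \<omega> = P_{tT}(\<omega>) *)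
    and \<pi> :: "real \<Rightarrow> 'a \<Rightarrow> real"
  assumes levy: "levy_process M F X"
    and A_int: "is_interval A" and A0: "0 \<in> A"
    and expmom: "levy_exponent M X A \<psi>"
    and SI: "linear_stoch_integral SI"
    and r_adapted: "adapted F r"
    and lam_pos: "\<And>t \<omega>. 0 \<le> t \<Longrightarrow> \<omega> \<in> space M \<Longrightarrow> lam t \<omega> > 0"
    and lam_adapted: "adapted F lam"
    and Om_pos: "\<And>t T \<omega>. 0 \<le> t \<Longrightarrow> t \<le> T \<Longrightarrow> \<omega> \<in> space M \<Longrightarrow> \<Omega> t T \<omega> > 0"
    and Om_adapted: "\<And>T. adapted F (\<lambda>t. \<Omega> t T)"
    and adm_lam: "admissible M F SI A \<psi> (\<lambda>t \<omega>. - lam t \<omega>)"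
    and adm_Om: "\<And>T. admissible M F SI A \<psi> (\<lambda>t. \<Omega> t T)"
    and adm_Om_lam: "\<And>T. admissible M F SI A \<psi> (\<lambda>t \<omega>. \<Omega> t T \<omega> - lam t \<omega>)"
    and Om_lim: "\<And>T \<omega>. T > 0 \<Longrightarrow> \<omega> \<in> space M \<Longrightarrow> ((\<lambda>t. \<Omega> t T \<omega>) \<longlongrightarrow> 0) (at_left T)"
    and int_r: "\<And>t \<omega>. 0 \<le> t \<Longrightarrow> \<omega> \<in> space M \<Longrightarrow> set_integrable lborel {0..t} (\<lambda>s. r s \<omega>)"
    and int_lam: "\<And>t \<omega>. 0 \<le> t \<Longrightarrow> \<omega> \<in> space M \<Longrightarrow>
                    set_integrable lborel {0..t} (\<lambda>s. \<psi> (- lam s \<omega>))"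
    and int_Om: "\<And>t T \<omega>. 0 \<le> t \<Longrightarrow> t \<le> T \<Longrightarrow> \<omega> \<in> space M \<Longrightarrow>
                    set_integrable lborel {0..t} (\<lambda>s. \<psi> (\<Omega> s T \<omega>))"
    and int_Om_lam: "\<And>t T \<omega>. 0 \<le> t \<Longrightarrow> t \<le> T \<Longrightarrow> \<omega> \<in> space M \<Longrightarrow>
                    set_integrable lborel {0..t} (\<lambda>s. \<psi> (\<Omega> s T \<omega> - lam s \<omega>))"
    and kernel: "\<And>t \<omega>. 0 \<le> t \<Longrightarrow> \<omega> \<in> space M \<Longrightarrow>
       \<pi> t \<omega> = exp (- (LBINT s:{0..t}. r s \<omega>) - SI lam t \<omega> - (LBINT s:{0..t}. \<psi> (- lam s \<omega>)))"
    and bond: "\<And>t T \<omega>. 0 \<le> t \<Longrightarrow> t \<le> T \<Longrightarrow> \<omega> \<in> space M \<Longrightarrow>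
       P t T \<omega> = P0 T * exp ((LBINT s:{0..t}. r s \<omega>) + (LBINT s:{0..t}. R_fun \<psi> (lam s \<omega>) (\<Omega> s T \<omega>))
                               + SI (\<lambda>s. \<Omega> s T) t \<omega> - (LBINT s:{0..t}. \<psi> (\<Omega> s T \<omega>)))"
    and maturity_lim: "\<And>T \<omega>. T > 0 \<Longrightarrow> \<omega> \<in> space M \<Longrightarrow> ((\<lambda>t. P t T \<omega>) \<longlongrightarrow> 1) (at_left T)"
    and maturity: "\<And>T \<omega>. 0 \<le> T \<Longrightarrow> \<omega> \<in> space M \<Longrightarrow> P T T \<omega> = 1"
  shows "\<And>t \<omega>. 0 \<le> t \<Longrightarrow> \<omega> \<in> space M \<Longrightarrow>
     \<pi> t \<omega> = P0 t * exp (SI (\<lambda>s w. \<Omega> s t w - lam s w) t \<omega> - (LBINT s:{0..t}. \<psi> (\<Omega> s t \<omega> - lam s \<omega>)))"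
proof -
  fix t :: real and \<omega> :: 'a assume t: "0 \<le> t" and w: "\<omega> \<in> space M"
  define Ir where "Ir = (LBINT s:{0..t}. r s \<omega>)"
  define I_Om where "I_Om = (LBINT s:{0..t}. \<psi> (\<Omega> s t \<omega>))"
  define I_lam where "I_lam = (LBINT s:{0..t}. \<psi> (- lam s \<omega>))"
  define I_Om_lam where "I_Om_lam = (LBINT s:{0..t}. \<psi> (\<Omega> s t \<omega> - lam s \<omega>))"
  have R_integral: "(LBINT s:{0..t}. R_fun \<psi> (lam s \<omega>) (\<Omega> s t \<omega>)) = I_Om + I_lam - I_Om_lam"
    unfolding I_Om_def I_lam_def I_Om_lam_def
    using t w by (intro set_integral_R_fun int_Om int_lam int_Om_lam) auto
  have "P0 t * exp (Ir + (I_Om + I_lam - I_Om_lam) + SI (\<lambda>s. \<Omega> s t) t \<omega> - I_Om) = 1"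
    using maturity[OF t w] bond[OF t order_refl w] R_integral unfolding Ir_def I_Om_def by simp
  then have P0_eq: "P0 t = exp (- (Ir + I_lam - I_Om_lam + SI (\<lambda>s. \<Omega> s t) t \<omega>))"
    by (auto dest: eq_exp_minus_if_mult_exp_eq_1 simp: algebra_simps)
  show "\<pi> t \<omega> = P0 t * exp (SI (\<lambda>s w. \<Omega> s t w - lam s w) t \<omega> - (LBINT s:{0..t}. \<psi> (\<Omega> s t \<omega> - lam s \<omega>)))"
    unfolding kernel[OF t w] P0_eq stoch_integral_diff[OF SI] I_Om_lam_def[symmetric]
      Ir_def[symmetric] I_lam_def[symmetric]
    by (simp flip: exp_add)
qed

end
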